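(* Let $s,t$ be real numbers. Then $\det U_4^{(rc)} = 3s^2t^2$, $\det U_5^{(rc)} = s^4t + 4s^2t^3$, and for every $n \geq 6$, $$\det U_n^{(rc)} = t\,\det U_{n-1}^{(rc)} + s^2 \det U_{n-2}^{(rc)}.$$
   Context: For $n\ge 1$, $U_n=U_n(s,t)$ is the $n\times n$ upper Hessenberg matrix with subdiagonal entries $a_{i+1,i}=s$, $a_{ij}=0$ for $i>j+1$, $a_{ij}=t$ if $j\ge i$ and $j-i$ is even, and $a_{ij}=0$ if $j>i$ and $j-i$ is odd. For $n\ge 4$, let $X_n$ be the matrix obtained from $U_n$ by replacing the $(1,1)$ entry by $s$, the $(2,1)$ entry by $t$, the $(n,n-1)$ entry by $t$ and the $(n,n)$ entry by $s$. Let $P_n^{(r)}$ be the $n\times n$ identity matrix with its first two rows interchanged and $P_n^{(c)}$ the $n\times n$ identity matrix with its last two columns interchanged, and define $U_n^{(rc)} = P_n^{(r)} X_n P_n^{(c)}$ (an upper Hessenberg matrix with subdiagonal entries $s$ and upper triangular entries in $\{0,t\}$). *)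

theory Defs
  imports "Jordan_Normal_Form.Determinant"
begin

(* Matrices are 0-indexed in Jordan_Normal_Form: paper entry (i,j) is our (i-1,j-1). *)

definition U :: "nat \<Rightarrow> real \<Rightarrow> real \<Rightarrow> real mat" where
  "U n s t = mat n n (\<lambda>(i,j).
      if i = j + 1 then s
      else if i > j + 1 then 0
      else if even (j - i) then t else 0)"

definition X :: "nat \<Rightarrow> real \<Rightarrow> real \<Rightarrow> real mat" where
  "X n s t = mat n n (\<lambda>(i,j).
      if (i,j) = (0,0) then s
      else if (i,j) = (1,0) then t
      else if (i,j) = (n-1,n-2) then t
      else if (i,j) = (n-1,n-1) then s
      else U n s t $$ (i,j))"

definition Pr :: "nat \<Rightarrow> real mat" where
  "Pr n = mat n n (\<lambda>(i,j). if j = Transposition.transpose 0 1 i then 1 else 0)"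

definition Pc :: "nat \<Rightarrow> real mat" where
  "Pc n = mat n n (\<lambda>(i,j). if i = Transposition.transpose (n-2) (n-1) j then 1 else 0)"

definition Urc :: "nat \<Rightarrow> real \<Rightarrow> real \<Rightarrow> real mat" where
  "Urc n s t = Pr n * X n s t * Pc n"

end

theory Submission imports Defs begin

text \<open>
  Both permutation matrices are transpositions, so \<open>det (Urc n) = det (X n)\<close>.
  Since \<open>X n\<close> is upper Hessenberg and, for \<open>j \<ge> 1\<close>, its column \<open>j + 2\<close> agrees with
  column \<open>j\<close> in rows \<open>0..j\<close>, expanding along the last row and then along the last row of the
  resulting minor expresses the determinant through the two preceding leading principal
  minors. For the leading blocks \<open>W k\<close> of \<open>X n\<close> this gives
  \<open>det (W k) = t det (W (k-1)) + s\<^sup>2 det (W (k-2))\<close> for \<open>k \<ge> 4\<close>, while the modified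
  last row yields \<open>det (X n) = s det (W (n-1)) + s t det (W (n-2))\<close>. The recurrence for
  \<open>W\<close> is linear, hence inherited by \<open>det (X n)\<close> as soon as \<open>n - 2 \<ge> 4\<close>.
\<close>

lemma det_mat_two_step_expansion:
  fixes f :: "nat \<times> nat \<Rightarrow> 'a::comm_ring_1"
  assumes last_row: "\<And>j. j \<le> m \<Longrightarrow> f (m+2, j) = 0"
    and row_before_last: "\<And>j. j < m \<Longrightarrow> f (m+1, j) = 0"
    and "f (m+1, m+2) = 0"
    and last_column: "\<And>i. i \<le> m \<Longrightarrow> f (i, m+2) = f (i, m)"
  shows "det (mat (m+3) (m+3) f) = f (m+2,m+2) * det (mat (m+2) (m+2) f)
          + f (m+2,m+1) * f (m+1,m) * det (mat (m+1) (m+1) f)"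
proof -
  let ?A = "mat (m+3) (m+3) f"
  let ?N = "mat_delete ?A (m+2) (m+1)"
  have minor_last: "mat_delete ?A (m+2) (m+2) = mat (m+2) (m+2) f"
    by (rule eq_matI) (auto simp: mat_delete_def)
  have minor_N: "mat_delete ?N (m+1) m = mat (m+1) (m+1) f"
  proof (rule eq_matI)
    fix i j assume "i < dim_row (mat (m+1) (m+1) f)" "j < dim_col (mat (m+1) (m+1) f)"
    then show "mat_delete ?N (m+1) m $$ (i, j) = mat (m+1) (m+1) f $$ (i, j)"
      using last_column[of i] by (cases "j = m") (auto simp: mat_delete_def)
  qed auto
  have N_carrier: "?N \<in> carrier_mat (m+2) (m+2)" by (auto simp: mat_delete_def)
  have "det ?N = (\<Sum>j<m+2. ?N $$ (m+1,j) * cofactor ?N (m+1) j)"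
    by (rule laplace_expansion_row[OF N_carrier]) simp
  also have "\<dots> = (\<Sum>j<m. ?N $$ (m+1,j) * cofactor ?N (m+1) j)
       + ?N $$ (m+1,m) * cofactor ?N (m+1) m + ?N $$ (m+1,m+1) * cofactor ?N (m+1) (m+1)"
    by (simp add: numeral_2_eq_2)
  also have "(\<Sum>j<m. ?N $$ (m+1,j) * cofactor ?N (m+1) j) = 0"
    by (rule sum.neutral) (auto simp: mat_delete_def row_before_last[simplified])
  also have "?N $$ (m+1,m) = f (m+1,m)" by (simp add: mat_delete_def)
  also have "?N $$ (m+1,m+1) = 0" using assms(3) by (simp add: mat_delete_def)
  finally have det_N: "det ?N = - f (m+1,m) * det (mat (m+1) (m+1) f)"
    unfolding cofactor_def minor_N by (simp add: power_add)
  have "det ?A = (\<Sum>j<m+3. ?A $$ (m+2,j) * cofactor ?A (m+2) j)"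
    by (rule laplace_expansion_row) auto
  also have "\<dots> = (\<Sum>j<Suc m. ?A $$ (m+2,j) * cofactor ?A (m+2) j)
       + ?A $$ (m+2,m+1) * cofactor ?A (m+2) (m+1) + ?A $$ (m+2,m+2) * cofactor ?A (m+2) (m+2)"
    by (simp add: numeral_3_eq_3)
  also have "(\<Sum>j<Suc m. ?A $$ (m+2,j) * cofactor ?A (m+2) j) = 0"
    by (rule sum.neutral) (auto simp: last_row[simplified])
  also have "?A $$ (m+2,m+1) = f (m+2,m+1)" by simp
  also have "?A $$ (m+2,m+2) = f (m+2,m+2)" by simp
  finally show ?thesis
    unfolding cofactor_def minor_last det_N by (simp add: power_add algebra_simps)
qed

lemma det_mat_2:
  "det (mat 2 2 f) = f (0,0) * f (1,1) - f (0,1) * (f (1,0) :: 'a :: comm_ring_1)"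
proof -
  have "det (mat 2 2 f) = (\<Sum>j<2. mat 2 2 f $$ (0,j) * cofactor (mat 2 2 f) 0 j)"
    by (rule laplace_expansion_row) auto
  then show ?thesis
    by (simp add: numeral_2_eq_2 cofactor_def mat_delete_def det_single)
qed

lemma det_mat_3:
  "det (mat 3 3 f) = f (0,0) * (f (1,1) * f (2,2) - f (1,2) * f (2,1))
   - f (0,1) * (f (1,0) * f (2,2) - f (1,2) * f (2,0))
   + f (0,2) * (f (1,0) * f (2,1) - f (1,1) * (f (2,0) :: 'a :: comm_ring_1))"
proof -
  have minor_0: "mat_delete (mat 3 3 f) 0 0
      = mat 2 2 (\<lambda>(i,j). f (if i = 0 then 1 else 2, if j = 0 then 1 else 2))"
    by (rule eq_matI) (auto simp: mat_delete_def less_Suc_eq numeral_2_eq_2)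
  have minor_1: "mat_delete (mat 3 3 f) 0 1
      = mat 2 2 (\<lambda>(i,j). f (if i = 0 then 1 else 2, if j = 0 then 0 else 2))"
    by (rule eq_matI) (auto simp: mat_delete_def less_Suc_eq numeral_2_eq_2)
  have minor_2: "mat_delete (mat 3 3 f) 0 2
      = mat 2 2 (\<lambda>(i,j). f (if i = 0 then 1 else 2, if j = 0 then 0 else 1))"
    by (rule eq_matI) (auto simp: mat_delete_def less_Suc_eq numeral_2_eq_2)
  have "det (mat 3 3 f) = (\<Sum>j<3. mat 3 3 f $$ (0,j) * cofactor (mat 3 3 f) 0 j)"
    by (rule laplace_expansion_row) auto
  also have "\<dots> = f (0,0) * cofactor (mat 3 3 f) 0 0 + f (0,1) * cofactor (mat 3 3 f) 0 1
     + f (0,2) * cofactor (mat 3 3 f) 0 2"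
    by (simp add: lessThan_Suc numeral_3_eq_3 numeral_2_eq_2 add.commute)
  finally show ?thesis
    unfolding cofactor_def minor_0 minor_1 minor_2 det_mat_2 by (simp add: algebra_simps)
qed

text \<open>The entries of \<open>X n\<close> outside its last row, which do not depend on \<open>n\<close>.\<close>

definition X_entry :: "real \<Rightarrow> real \<Rightarrow> nat \<times> nat \<Rightarrow> real" where
  "X_entry s t = (\<lambda>(i,j).
      if (i,j) = (0,0) then s
      else if (i,j) = (1,0) then t
      else if i = j + 1 then s
      else if i > j + 1 then 0
      else if even (j - i) then t else 0)"

lemma det_X_entry_2: "det (mat 2 2 (X_entry s t)) = s * t"
  by (simp add: det_mat_2 X_entry_def)

lemma det_X_entry_3: "det (mat 3 3 (X_entry s t)) = 2 * s * t^2"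
  by (simp add: det_mat_3 X_entry_def power2_eq_square)

lemma det_X_entry_recurrence:
  assumes "4 \<le> n"
  shows "det (mat n n (X_entry s t)) = t * det (mat (n-1) (n-1) (X_entry s t))
          + s^2 * det (mat (n-2) (n-2) (X_entry s t))"
proof -
  obtain m where n: "n = m + 3" and "1 \<le> m"
    using assms by (intro that[of "n - 3"]) auto
  have "det (mat (m+3) (m+3) (X_entry s t))
      = X_entry s t (m+2,m+2) * det (mat (m+2) (m+2) (X_entry s t))
        + X_entry s t (m+2,m+1) * X_entry s t (m+1,m) * det (mat (m+1) (m+1) (X_entry s t))"
    by (rule det_mat_two_step_expansion)
      (use \<open>1 \<le> m\<close> in \<open>auto simp: X_entry_def Suc_diff_le\<close>)
  then show ?thesis
    using \<open>1 \<le> m\<close> by (simp add: n X_entry_def power2_eq_square)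
qed

lemma det_X:
  assumes "4 \<le> n"
  shows "det (X n s t) = s * det (mat (n-1) (n-1) (X_entry s t))
          + s * t * det (mat (n-2) (n-2) (X_entry s t))"
proof -
  obtain m where n: "n = m + 3" and "1 \<le> m"
    using assms by (intro that[of "n - 3"]) auto
  define h where "h = (\<lambda>(i,j). if (i,j) = (m+2,m+1) then t
     else if (i,j) = (m+2,m+2) then s else X_entry s t (i,j))"
  have X_eq: "X n s t = mat (m+3) (m+3) h"
    by (rule eq_matI) (auto simp: n h_def X_def U_def X_entry_def)
  have leading_blocks: "mat k k h = mat k k (X_entry s t)" if "k \<le> m + 2" for k
    by (rule eq_matI) (use that in \<open>auto simp: h_def\<close>)
  have h_last: "h (m+2,m+2) = s" "h (m+2,m+1) = t" "h (m+1,m) = s"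
    using \<open>1 \<le> m\<close> by (auto simp: h_def X_entry_def)
  have "det (X n s t) = h (m+2,m+2) * det (mat (m+2) (m+2) h)
          + h (m+2,m+1) * h (m+1,m) * det (mat (m+1) (m+1) h)"
    unfolding X_eq by (rule det_mat_two_step_expansion)
      (use \<open>1 \<le> m\<close> in \<open>auto simp: h_def X_entry_def Suc_diff_le\<close>)
  then show ?thesis
    unfolding h_last by (simp add: leading_blocks n algebra_simps)
qed

lemma Pr_eq_swaprows_mat: "Pr n = swaprows_mat n 0 1"
  by (rule eq_matI) (auto simp: Pr_def Transposition.transpose_def)

lemma Pc_eq_swaprows_mat: "Pc n = swaprows_mat n (n-2) (n-1)"
  by (rule eq_matI) (auto simp: Pc_def Transposition.transpose_def)

lemma det_Urc_eq_det_X: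
  assumes "2 \<le> n"
  shows "det (Urc n s t) = det (X n s t)"
proof -
  have X: "X n s t \<in> carrier_mat n n" by (simp add: X_def)
  have P: "Pr n \<in> carrier_mat n n" "Pc n \<in> carrier_mat n n"
    by (simp_all add: Pr_eq_swaprows_mat Pc_eq_swaprows_mat)
  have "det (Pr n) = -1" "det (Pc n) = -1"
    unfolding Pr_eq_swaprows_mat Pc_eq_swaprows_mat
    by (rule det_swaprows_mat; use assms in auto)+
  moreover have "det (Urc n s t) = det (Pr n) * det (X n s t) * det (Pc n)"
    unfolding Urc_def by (simp add: det_mult[OF mult_carrier_mat[OF P(1) X] P(2)] det_mult[OF P(1) X])
  ultimately show ?thesis by simp
qed

theorem proposition4p3:
  fixes s t :: real
  shows "det (Urc 4 s t) = 3 * s^2 * t^2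
       \<and> det (Urc 5 s t) = s^4 * t + 4 * s^2 * t^3
       \<and> (\<forall>n\<ge>6. det (Urc n s t) = t * det (Urc (n-1) s t) + s^2 * det (Urc (n-2) s t))"
proof -
  define W where "W k = det (mat k k (X_entry s t))" for k
  have Urc: "det (Urc n s t) = s * W (n-1) + s * t * W (n-2)" if "4 \<le> n" for n
    using that by (simp add: W_def det_Urc_eq_det_X det_X)
  have W_rec: "W n = t * W (n-1) + s^2 * W (n-2)" if "4 \<le> n" for n
    using that by (simp add: W_def det_X_entry_recurrence)
  have W2: "W 2 = s * t" and W3: "W 3 = 2 * s * t^2"
    by (simp_all add: W_def det_X_entry_2 det_X_entry_3)
  have W4: "W 4 = 2 * s * t^3 + s^3 * t"
    using W_rec[of 4] W2 W3 by (simp add: power2_eq_square power3_eq_cube algebra_simps)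
  have "det (Urc n s t) = t * det (Urc (n-1) s t) + s^2 * det (Urc (n-2) s t)" if "6 \<le> n" for n
    using that Urc[of n] Urc[of "n-1"] Urc[of "n-2"] W_rec[of "n-1"] W_rec[of "n-2"]
    by (simp add: algebra_simps numeral_eq_Suc)
  moreover have "det (Urc 4 s t) = 3 * s^2 * t^2" "det (Urc 5 s t) = s^4 * t + 4 * s^2 * t^3"
    using Urc[of 4] Urc[of 5] W2 W3 W4 by (simp_all add: power2_eq_square power3_eq_cube
        power4_eq_xxxx algebra_simps)
  ultimately show ?thesis by blast
qed

end
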